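(* Let $k$ be a positive integer, $N$ a positive integer, $0=t_0<t_1<\dots<t_N=1$, $p_0,\ldots,p_N\in\mathbb{R}$, $v_1,\ldots,v_{k-1}\in\mathbb{R}$ and $j\in\{0,\ldots,N\}$. Let \[ \Gamma_k=\{\gamma\in H^k([0,1],\mathbb{R}):\ \gamma(t_i)=p_i\ \forall i=0,\ldots,N,\ \gamma^{(\ell)}(t_j)=v_\ell\ \forall\ell=1,\ldots,k-1\},\qquad f_k(\gamma)=\int_0^1|\gamma^{(k)}(t)|^2\,\mathrm{d}t. \] Let $\gamma\in\Gamma_k$ be a critical point of $f_k$, i.e. $\int_0^1\gamma^{(k)}(t)\xi^{(k)}(t)\,\mathrm{d}t=0$ for every $\xi\in V_k=\{\xi\in H^k([0,1],\mathbb{R}):\ \xi(t_i)=0\ \forall i=0,\ldots,N,\ \xi^{(\ell)}(t_j)=0\ \forall\ell=1,\ldots,k-1\}$. Then for every $i=1,\ldots,N$ the restriction $\gamma|_{[t_{i-1},t_i]}$ is smooth and $\frac{\mathrm{d}^{2k}}{\mathrm{d}t^{2k}}\gamma(t)=0$ for all $t\in[t_{i-1},t_i]$. Moreover, both $\gamma|_{[0,t_j]}$ and $\gamma|_{[t_j,1]}$ are of class $C^{2k-2}$; if $t_j\neq0$ then $\gamma^{(k+\ell-1)}(0)=0$ for every $\ell=1,\ldots,k-1$, and if $t_j\neq1$ then $\gamma^{(k+\ell-1)}(1)=0$ for every $\ell=1,\ldots,k-1$.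
   Context: $H^k([0,1],\mathbb{R})$ is the Sobolev space of real functions on $[0,1]$ with $k$-th weak derivative in $L^2$; $\gamma^{(\ell)}$ denotes the $\ell$-th derivative. Derivatives of $\gamma|_{[t_{i-1},t_i]}$ at the endpoints are one-sided. *)

theory Defs
  imports "HOL-Analysis.Analysis"
begin

fun ider :: "nat \<Rightarrow> real set \<Rightarrow> (real \<Rightarrow> real) \<Rightarrow> real \<Rightarrow> real" where
  "ider 0 S f = f"
| "ider (Suc n) S f = (\<lambda>x. vector_derivative (ider n S f) (at x within S))"

definition Ck_on :: "nat \<Rightarrow> real set \<Rightarrow> (real \<Rightarrow> real) \<Rightarrow> bool" where
  "Ck_on m S f \<longleftrightarrow>
     (\<forall>n<m. \<forall>x\<in>S. (ider n S f has_vector_derivative ider (Suc n) S f x) (at x within S))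
     \<and> continuous_on S (ider m S f)"

definition smooth_on :: "real set \<Rightarrow> (real \<Rightarrow> real) \<Rightarrow> bool" where
  "smooth_on S f \<longleftrightarrow> (\<forall>m. Ck_on m S f)"

text \<open>Sobolev space H^k([0,1]) (canonical, i.e. C^(k-1), representatives):
  gamma and its derivatives g l (l < k) are iterated primitives, and the k-th (weak)
  derivative g k lies in L^2([0,1]).\<close>
definition sobolev_H :: "nat \<Rightarrow> (real \<Rightarrow> real) set" where
  "sobolev_H k = {\<gamma>. \<exists>g::nat \<Rightarrow> real \<Rightarrow> real.
      (\<forall>t\<in>{0..1}. g 0 t = \<gamma> t)
    \<and> (\<forall>l<k. \<forall>t\<in>{0..1}. (g (Suc l) has_integral (g l t - g l 0)) {0..t})
    \<and> g k absolutely_integrable_on {0..1}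
    \<and> (\<lambda>t. (g k t)\<^sup>2) integrable_on {0..1}}"

abbreviation D01 :: "nat \<Rightarrow> (real \<Rightarrow> real) \<Rightarrow> real \<Rightarrow> real" where
  "D01 l f \<equiv> ider l {0..1} f"

definition Gamma_k :: "nat \<Rightarrow> nat \<Rightarrow> (nat \<Rightarrow> real) \<Rightarrow> (nat \<Rightarrow> real) \<Rightarrow> (nat \<Rightarrow> real) \<Rightarrow> nat
    \<Rightarrow> (real \<Rightarrow> real) set" where
  "Gamma_k k N t p v j = {\<gamma> \<in> sobolev_H k. (\<forall>i\<le>N. \<gamma> (t i) = p i)
       \<and> (\<forall>l\<in>{1..k-1}. D01 l \<gamma> (t j) = v l)}"

definition V_k :: "nat \<Rightarrow> nat \<Rightarrow> (nat \<Rightarrow> real) \<Rightarrow> nat \<Rightarrow> (real \<Rightarrow> real) set" where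
  "V_k k N t j = {\<xi> \<in> sobolev_H k. (\<forall>i\<le>N. \<xi> (t i) = 0)
       \<and> (\<forall>l\<in>{1..k-1}. D01 l \<xi> (t j) = 0)}"

end

theory Submission
  imports Defs
begin

lemma Henstock_lemma_disjoint_intervals:
  fixes f :: "real \<Rightarrow> real"
  assumes f: "f integrable_on {a..b}" and \<epsilon>: "0 < \<epsilon>"
  obtains \<delta> where "\<And>x. 0 < \<delta> x"
    "\<And>C. finite C \<Longrightarrow>
       (\<forall>(x, u, v)\<in>C. a \<le> u \<and> u \<le> x \<and> x \<le> v \<and> v \<le> b \<and> u < v \<and> v - u < \<delta> x) \<Longrightarrow>
       pairwise (\<lambda>(_, u, v) (_, u', v'). disjnt {u..v} {u'..v'}) C \<Longrightarrow>
       (\<Sum>(x, u, v)\<in>C. \<bar>integral {u..v} f - f x * (v - u)\<bar>) < \<epsilon>"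
proof -
  obtain g where g: "gauge g" and small: "\<And>p. p tagged_partial_division_of cbox a b \<Longrightarrow> g fine p \<Longrightarrow>
      (\<Sum>(x, K)\<in>p. norm (Henstock_Kurzweil_Integration.content K *\<^sub>R f x - integral K f)) < \<epsilon>"
    using Henstock_lemma[of f a b \<epsilon>] f \<epsilon> by auto
  have "\<forall>x. \<exists>d>0. ball x d \<subseteq> g x"
    using g unfolding gauge_def by (meson open_contains_ball)
  then obtain \<delta> where \<delta>: "\<And>x. 0 < \<delta> x" "\<And>x. ball x (\<delta> x) \<subseteq> g x" by metis
  show thesis
  proof (rule that[OF \<delta>(1)])
    fix C assume fin: "finite C"
      and C_bound: "\<forall>(x, u, v)\<in>C. a \<le> u \<and> u \<le> x \<and> x \<le> v \<and> v \<le> b \<and> u < v \<and> v - u < \<delta> x"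
      and disj: "pairwise (\<lambda>(_, u, v) (_, u', v'). disjnt {u..v} {u'..v'}) C"
    have C: "a \<le> u \<and> u \<le> x \<and> x \<le> v \<and> v \<le> b \<and> u < v \<and> v - u < \<delta> x" if "(x, u, v) \<in> C" for x u v
      using C_bound that by blast
    define tag :: "real \<times> real \<times> real \<Rightarrow> real \<times> real set" where "tag = (\<lambda>(x, u, v). (x, {u..v}))"
    have inj: "inj_on tag C"
      by (rule inj_onI) (force simp: tag_def dest!: C)
    have "tag ` C tagged_partial_division_of cbox a b"
      unfolding tagged_partial_division_of_def
    proof (intro conjI allI impI)
      fix x1 K1 x2 K2 assume "(x1, K1) \<in> tag ` C \<and> (x2, K2) \<in> tag ` C \<and> (x1, K1) \<noteq> (x2, K2)"
      then have "disjnt K1 K2"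
        using disj unfolding pairwise_def tag_def by force
      then show "interior K1 \<inter> interior K2 = {}"
        using interior_subset by (fastforce simp: disjnt_def)
    qed (use fin C in \<open>force simp: tag_def\<close>)+
    moreover have "g fine tag ` C"
      using C \<delta>(2) by (fastforce simp: fine_def tag_def dist_real_def)
    ultimately have "(\<Sum>(x, K)\<in>tag ` C. norm (Henstock_Kurzweil_Integration.content K *\<^sub>R f x - integral K f)) < \<epsilon>"
      by (rule small)
    also have "(\<Sum>(x, K)\<in>tag ` C. norm (Henstock_Kurzweil_Integration.content K *\<^sub>R f x - integral K f))
        = (\<Sum>(x, u, v)\<in>C. \<bar>integral {u..v} f - f x * (v - u)\<bar>)"
      by (subst sum.reindex[OF inj])
         (auto intro!: sum.cong dest!: C simp: tag_def abs_minus_commute mult.commute)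
    finally show "(\<Sum>(x, u, v)\<in>C. \<bar>integral {u..v} f - f x * (v - u)\<bar>) < \<epsilon>" .
  qed
qed

lemma countable_cballs_cover_measure_le:
  fixes c :: "'i \<Rightarrow> 'a::euclidean_space"
  assumes C: "countable C" and S: "negligible (S - (\<Union>i\<in>C. cball (c i) (r i)))"
    and bound: "\<And>C'. C' \<subseteq> C \<Longrightarrow> finite C' \<Longrightarrow> (\<Sum>i\<in>C'. measure lebesgue (cball (c i) (r i))) \<le> \<eta>"
  shows "\<exists>T. S \<subseteq> T \<and> T \<in> lmeasurable \<and> measure lebesgue T \<le> \<eta>"
proof -
  define \<D> where "\<D> = (\<lambda>i. cball (c i) (r i)) ` C"
  have finite_bound: "measure lebesgue (\<Union>\<E>) \<le> \<eta>" if "\<E> \<subseteq> \<D>" "finite \<E>" for \<E>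
  proof -
    obtain C' where C': "C' \<subseteq> C" "finite C'" "\<E> = (\<lambda>i. cball (c i) (r i)) ` C'"
      using finite_subset_image[OF \<open>finite \<E>\<close> \<open>\<E> \<subseteq> \<D>\<close>[unfolded \<D>_def]] by blast
    have "measure lebesgue (\<Union>\<E>) \<le> (\<Sum>i\<in>C'. measure lebesgue (cball (c i) (r i)))"
      unfolding C'(3) by (rule measure_UNION_le) (auto simp: C'(2))
    then show ?thesis using bound[OF C'(1,2)] by linarith
  qed
  have \<D>: "countable \<D>" "\<And>D. D \<in> \<D> \<Longrightarrow> D \<in> lmeasurable"
    using C by (auto simp: \<D>_def)
  have U: "\<Union>\<D> \<in> lmeasurable" "measure lebesgue (\<Union>\<D>) \<le> \<eta>"
    using fmeasurable_Union_bound[OF \<D> finite_bound] measure_Union_bound[OF \<D> finite_bound] by blast+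
  have "negligible (S - \<Union>\<D>)"
    using S by (simp add: \<D>_def)
  then have N: "S - \<Union>\<D> \<in> lmeasurable" "measure lebesgue (S - \<Union>\<D>) = 0"
    by (simp_all add: negligible_imp_measurable negligible_imp_measure0)
  have "measure lebesgue (\<Union>\<D> \<union> (S - \<Union>\<D>)) \<le> measure lebesgue (\<Union>\<D>) + measure lebesgue (S - \<Union>\<D>)"
    using U(1) N(1) by (intro measure_Un_le fmeasurableD)
  moreover have "\<Union>\<D> \<union> (S - \<Union>\<D>) \<in> lmeasurable"
    by (rule fmeasurable.Un[OF U(1) N(1)])
  ultimately show ?thesis
    using U(2) N(2) by (intro exI[of _ "\<Union>\<D> \<union> (S - \<Union>\<D>)"]) auto
qed

lemma negligible_integral_deviation_points:
  fixes f :: "real \<Rightarrow> real"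
  assumes f: "f integrable_on {a..b}" and e: "0 < e"
  shows "negligible {x. \<forall>d>0. \<exists>u v. a \<le> u \<and> u \<le> x \<and> x \<le> v \<and> v \<le> b \<and> u < v \<and> v - u < d
           \<and> e * (v - u) \<le> \<bar>integral {u..v} f - f x * (v - u)\<bar>}" (is "negligible ?S")
  unfolding negligible_outer_le
proof (intro allI impI)
  fix \<eta> :: real assume "0 < \<eta>"
  obtain \<delta> where \<delta>: "\<And>x. 0 < \<delta> x"
    and small: "\<And>C. finite C \<Longrightarrow>
       (\<forall>(x, u, v)\<in>C. a \<le> u \<and> u \<le> x \<and> x \<le> v \<and> v \<le> b \<and> u < v \<and> v - u < \<delta> x) \<Longrightarrow>
       pairwise (\<lambda>(_, u, v) (_, u', v'). disjnt {u..v} {u'..v'}) C \<Longrightarrow>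
       (\<Sum>(x, u, v)\<in>C. \<bar>integral {u..v} f - f x * (v - u)\<bar>) < e * \<eta>"
    by (rule Henstock_lemma_disjoint_intervals[OF f mult_pos_pos[OF e \<open>0 < \<eta>\<close>]]) (rule that)
  define K where "K = {(x, u, v). a \<le> u \<and> u \<le> x \<and> x \<le> v \<and> v \<le> b \<and> u < v \<and> v - u < \<delta> x
      \<and> e * (v - u) \<le> \<bar>integral {u..v} f - f x * (v - u)\<bar>}"
  define c :: "real \<times> real \<times> real \<Rightarrow> real" where "c = (\<lambda>(_, u, v). (u + v) / 2)"
  define r :: "real \<times> real \<times> real \<Rightarrow> real" where "r = (\<lambda>(_, u, v). (v - u) / 2)"
  have cball_eq: "cball (c i) (r i) = {fst (snd i)..snd (snd i)}" for i
    by (cases i) (auto simp: c_def r_def cball_eq_atLeastAtMost field_simps)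
  have cover: "\<exists>i. i \<in> K \<and> x \<in> cball (c i) (r i) \<and> r i < d" if x: "x \<in> ?S" and "0 < d" for x d
  proof -
    have "0 < min d (\<delta> x)"
      using \<open>0 < d\<close> \<delta>[of x] by simp
    then obtain u v where "a \<le> u" "u \<le> x" "x \<le> v" "v \<le> b" "u < v" "v - u < min d (\<delta> x)"
      "e * (v - u) \<le> \<bar>integral {u..v} f - f x * (v - u)\<bar>"
      using x unfolding mem_Collect_eq by blast
    moreover have "x \<in> cball (c (x, u, v)) (r (x, u, v))"
      unfolding cball_eq using \<open>u \<le> x\<close> \<open>x \<le> v\<close> by simp
    ultimately show ?thesis
      by (intro exI[of _ "(x, u, v)"]) (auto simp: K_def r_def)
  qed
  obtain C where C: "countable C" "C \<subseteq> K"
    and disj: "pairwise (\<lambda>i j. disjnt (cball (c i) (r i)) (cball (c j) (r j))) C"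
    and null: "negligible (?S - (\<Union>i\<in>C. cball (c i) (r i)))"
    using Vitali_covering_theorem_cballs[of K r ?S c] cover by (force simp: K_def r_def)
  have "(\<Sum>i\<in>C'. measure lebesgue (cball (c i) (r i))) \<le> \<eta>" if C': "C' \<subseteq> C" "finite C'" for C'
  proof -
    have "e * (\<Sum>i\<in>C'. measure lebesgue (cball (c i) (r i))) = (\<Sum>(x, u, v)\<in>C'. e * (v - u))"
      using C' C by (auto simp: sum_distrib_left cball_eq K_def intro!: sum.cong)
    also have "\<dots> \<le> (\<Sum>(x, u, v)\<in>C'. \<bar>integral {u..v} f - f x * (v - u)\<bar>)"
      using C' C by (intro sum_mono) (auto simp: K_def)
    also have "\<dots> < e * \<eta>"
    proof (rule small[OF C'(2)])
      show "pairwise (\<lambda>(_, u, v) (_, u', v'). disjnt {u..v} {u'..v'}) C'"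
        by (rule pairwise_mono[OF disj _ C'(1)]) (auto simp: cball_eq split: prod.splits)
    qed (use C' C in \<open>auto simp: K_def\<close>)
    finally show ?thesis using e by simp
  qed
  then show "\<exists>T. ?S \<subseteq> T \<and> T \<in> lmeasurable \<and> measure lebesgue T \<le> \<eta>"
    by (rule countable_cballs_cover_measure_le[OF C(1) null])
qed

lemma integral_has_real_derivative_if_small_deviation:
  fixes f :: "real \<Rightarrow> real"
  assumes f: "f integrable_on {a..b}" and x: "a < x" "x < b"
    and small: "\<And>e. 0 < e \<Longrightarrow> \<exists>d>0. \<forall>u v. a \<le> u \<and> u \<le> x \<and> x \<le> v \<and> v \<le> b \<and> u < v \<and> v - u < d
                  \<longrightarrow> \<bar>integral {u..v} f - f x * (v - u)\<bar> < e * (v - u)"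
  shows "((\<lambda>t. integral {a..t} f) has_real_derivative f x) (at x)"
  unfolding has_field_derivative_iff tendsto_iff eventually_at
proof (intro allI impI)
  fix e :: real assume "0 < e"
  then obtain d where "0 < d" and d: "\<forall>u v. a \<le> u \<and> u \<le> x \<and> x \<le> v \<and> v \<le> b \<and> u < v \<and> v - u < d
      \<longrightarrow> \<bar>integral {u..v} f - f x * (v - u)\<bar> < e * (v - u)"
    using small by blast
  have combine: "integral {a..v} f - integral {a..u} f = integral {u..v} f" if "a \<le> u" "u \<le> v" "v \<le> b" for u v
    using Henstock_Kurzweil_Integration.integral_combine[of a u v f] integrable_subinterval_real[OF f, of a v] that
    by simp
  show "\<exists>d>0. \<forall>y\<in>UNIV. y \<noteq> x \<and> dist y x < d \<longrightarrow>
          dist ((integral {a..y} f - integral {a..x} f) / (y - x)) (f x) < e"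
  proof (intro exI[of _ "min d (min (x - a) (b - x))"] conjI ballI impI)
    fix y assume "y \<noteq> x \<and> dist y x < min d (min (x - a) (b - x))"
    then have y: "y \<noteq> x" "\<bar>y - x\<bar> < d" "a < y" "y < b"
      by (auto simp: dist_real_def)
    have "\<bar>integral {a..y} f - integral {a..x} f - f x * (y - x)\<bar> < e * \<bar>y - x\<bar>"
    proof (cases "x < y")
      case True
      then show ?thesis
        using d[rule_format, of x y] combine[of x y] x y by simp
    next
      case False
      then have "\<bar>integral {y..x} f - f x * (x - y)\<bar> < e * (x - y)"
        using d[rule_format, of y x] x y by simp
      then show ?thesis
        using combine[of y x] x y False by (simp add: abs_minus_commute algebra_simps)
    qed
    then show "dist ((integral {a..y} f - integral {a..x} f) / (y - x)) (f x) < e"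
      using y(1) by (simp add: dist_real_def abs_divide pos_divide_less_eq diff_divide_distrib[symmetric]
          divide_diff_eq_iff)
  qed (use \<open>0 < d\<close> x in auto)
qed

theorem integral_has_real_derivative_ae:
  fixes f :: "real \<Rightarrow> real"
  assumes f: "f integrable_on {a..b}"
  obtains N where "negligible N"
    "\<And>x. x \<in> {a<..<b} - N \<Longrightarrow> ((\<lambda>t. integral {a..t} f) has_real_derivative f x) (at x)"
proof
  define N where "N = (\<Union>n::nat. {x. \<forall>d>0. \<exists>u v. a \<le> u \<and> u \<le> x \<and> x \<le> v \<and> v \<le> b \<and> u < v \<and> v - u < d
           \<and> 1 / Suc n * (v - u) \<le> \<bar>integral {u..v} f - f x * (v - u)\<bar>})"
  show "negligible N"
    unfolding N_def by (intro negligible_Union_nat negligible_integral_deviation_points[OF f]) simp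
  fix x assume x: "x \<in> {a<..<b} - N"
  show "((\<lambda>t. integral {a..t} f) has_real_derivative f x) (at x)"
  proof (rule integral_has_real_derivative_if_small_deviation[OF f])
    fix e :: real assume "0 < e"
    then obtain n :: nat where n: "1 / Suc n < e"
      by (metis nat_approx_posE)
    from x have "x \<notin> {x. \<forall>d>0. \<exists>u v. a \<le> u \<and> u \<le> x \<and> x \<le> v \<and> v \<le> b \<and> u < v \<and> v - u < d
           \<and> 1 / Suc n * (v - u) \<le> \<bar>integral {u..v} f - f x * (v - u)\<bar>}"
      unfolding N_def by blast
    then obtain d where "0 < d" and d: "\<forall>u v. a \<le> u \<and> u \<le> x \<and> x \<le> v \<and> v \<le> b \<and> u < v \<and> v - u < d
        \<longrightarrow> \<bar>integral {u..v} f - f x * (v - u)\<bar> < 1 / Suc n * (v - u)"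
      by (fastforce simp: not_le)
    have "1 / Suc n * (v - u) \<le> e * (v - u)" if "u < v" for u v
      using n that by (intro mult_right_mono) auto
    then show "\<exists>d>0. \<forall>u v. a \<le> u \<and> u \<le> x \<and> x \<le> v \<and> v \<le> b \<and> u < v \<and> v - u < d
            \<longrightarrow> \<bar>integral {u..v} f - f x * (v - u)\<bar> < e * (v - u)"
      using \<open>0 < d\<close> d by (meson less_le_trans)
  qed (use x in auto)
qed

lemma ider_cong:
  assumes "\<And>y. y \<in> S \<Longrightarrow> f y = g y" "x \<in> S"
  shows "ider n S f x = ider n S g x"
  using assms(2)
proof (induction n arbitrary: x)
  case (Suc n)
  then show ?case
    by (auto intro!: vector_derivative_cong_eq always_eventually)
qed (use assms(1) in simp)

lemma ider_eq_derivative_chain: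
  fixes F :: "nat \<Rightarrow> real \<Rightarrow> real"
  assumes "c < d"
    and F0: "\<And>x. x \<in> {c..d} \<Longrightarrow> F 0 x = f x"
    and F: "\<And>n x. n < m \<Longrightarrow> x \<in> {c..d} \<Longrightarrow> (F n has_vector_derivative F (Suc n) x) (at x within {c..d})"
  shows "n \<le> m \<Longrightarrow> x \<in> {c..d} \<Longrightarrow> ider n {c..d} f x = F n x"
proof (induction n arbitrary: x)
  case (Suc n)
  have "(ider n {c..d} f has_vector_derivative F (Suc n) x) (at x within {c..d})"
    using Suc by (intro has_vector_derivative_transform[OF _ _ F]) auto
  then show ?case
    using vector_derivative_within_cbox[of c d x] \<open>c < d\<close> Suc.prems by simp
qed (use F0 in simp)

lemma Ck_on_derivative_chain:
  fixes F :: "nat \<Rightarrow> real \<Rightarrow> real"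
  assumes "c \<le> d"
    and F0: "\<And>x. x \<in> {c..d} \<Longrightarrow> F 0 x = f x"
    and F: "\<And>n x. n < m \<Longrightarrow> x \<in> {c..d} \<Longrightarrow> (F n has_vector_derivative F (Suc n) x) (at x within {c..d})"
    and cont: "continuous_on {c..d} (F m)"
  shows "Ck_on m {c..d} f"
proof (cases "c = d")
  case True
  then show ?thesis
    by (simp add: Ck_on_def has_vector_derivative_def has_derivative_within_singleton_iff
        bounded_linear_mult_left)
next
  case False
  then have "c < d" using \<open>c \<le> d\<close> by simp
  have ider_F: "\<And>n x. n \<le> m \<Longrightarrow> x \<in> {c..d} \<Longrightarrow> ider n {c..d} f x = F n x"
    using ider_eq_derivative_chain[OF \<open>c < d\<close> F0 F] by blast
  show ?thesis
    unfolding Ck_on_def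
  proof (intro conjI allI impI ballI)
    fix n x assume n: "n < m" and x: "x \<in> {c..d}"
    have "(ider n {c..d} f has_vector_derivative F (Suc n) x) (at x within {c..d})"
      by (rule has_vector_derivative_transform[OF x _ F[OF n x]]) (use n ider_F in simp)
    then show "(ider n {c..d} f has_vector_derivative ider (Suc n) {c..d} f x) (at x within {c..d})"
      using ider_F[of "Suc n" x] n x by simp
  next
    show "continuous_on {c..d} (ider m {c..d} f)"
      using cont by (rule continuous_on_eq) (simp add: ider_F)
  qed
qed

lemma smooth_on_derivative_chain:
  fixes F :: "nat \<Rightarrow> real \<Rightarrow> real"
  assumes "c \<le> d"
    and F0: "\<And>x. x \<in> {c..d} \<Longrightarrow> F 0 x = f x"
    and F: "\<And>n x. x \<in> {c..d} \<Longrightarrow> (F n has_vector_derivative F (Suc n) x) (at x within {c..d})"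
  shows "smooth_on {c..d} f"
  unfolding smooth_on_def
proof
  fix m
  show "Ck_on m {c..d} f"
  proof (rule Ck_on_derivative_chain[where F = F, OF assms(1) F0])
    show "continuous_on {c..d} (F m)"
      unfolding continuous_on_eq_continuous_within by (blast intro: has_vector_derivative_continuous F)
  qed (simp_all add: F)
qed

lemma Ck_on_cong:
  assumes eq: "\<And>x. x \<in> S \<Longrightarrow> f x = g x" and f: "Ck_on m S f"
  shows "Ck_on m S g"
  unfolding Ck_on_def
proof (intro conjI allI impI ballI)
  fix n x assume "n < m" and x: "x \<in> S"
  then have "(ider n S f has_vector_derivative ider (Suc n) S f x) (at x within S)"
    using f by (simp add: Ck_on_def)
  then have "(ider n S g has_vector_derivative ider (Suc n) S f x) (at x within S)"
    by (rule has_vector_derivative_transform[OF x, rotated]) (rule ider_cong[OF eq, symmetric])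
  then show "(ider n S g has_vector_derivative ider (Suc n) S g x) (at x within S)"
    by (simp only: ider_cong[OF eq x])
next
  have "continuous_on S (ider m S f)"
    using f by (simp add: Ck_on_def)
  then show "continuous_on S (ider m S g)"
    by (rule continuous_on_eq) (rule ider_cong[OF eq])
qed

lemma smooth_on_cong:
  assumes "\<And>x. x \<in> S \<Longrightarrow> f x = g x" "smooth_on S f"
  shows "smooth_on S g"
  using Ck_on_cong[OF assms(1)] assms(2) by (auto simp: smooth_on_def)

lemma poly_has_vector_derivative_within:
  "(poly p has_vector_derivative poly (pderiv p) x) (at x within S)"
  using poly_DERIV[of p x]
  by (simp add: has_real_derivative_iff_has_vector_derivative has_vector_derivative_at_within)

lemma smooth_on_poly: "c \<le> d \<Longrightarrow> smooth_on {c..d} (poly p)"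
  by (rule smooth_on_derivative_chain[of c d "\<lambda>n. poly ((pderiv ^^ n) p)"])
     (auto intro: poly_has_vector_derivative_within)

lemma ider_poly: "c < d \<Longrightarrow> x \<in> {c..d} \<Longrightarrow> ider n {c..d} (poly p) x = poly ((pderiv ^^ n) p) x"
  by (rule ider_eq_derivative_chain[of c d "\<lambda>n. poly ((pderiv ^^ n) p)" _ n])
     (auto intro: poly_has_vector_derivative_within)

lemma higher_pderiv_eq_0: "degree p < n \<Longrightarrow> (pderiv ^^ n) p = 0"
  by (rule poly_eqI) (simp add: coeff_higher_pderiv coeff_eq_0)

lemma power_dvd_higher_pderiv:
  fixes p q :: "'a::idom poly"
  shows "q ^ (l + m) dvd p \<Longrightarrow> q ^ m dvd (pderiv ^^ l) p"
proof (induction l arbitrary: m)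
  case (Suc l)
  have "q ^ (l + Suc m) dvd p"
    using Suc.prems by (metis add_Suc add_Suc_right)
  then have "q ^ Suc m dvd (pderiv ^^ l) p"
    by (rule Suc.IH)
  then obtain r where r: "(pderiv ^^ l) p = q ^ Suc m * r"
    by (elim dvdE)
  have "pderiv ((pderiv ^^ l) p) = q ^ m * (q * pderiv r + r * smult (of_nat (Suc m)) (pderiv q))"
    unfolding r pderiv_mult pderiv_power_Suc by (simp add: algebra_simps)
  then show ?case
    by simp
qed simp

lemma poly_higher_pderiv_eq_0_if_dvd:
  fixes p :: "'a::idom poly"
  assumes "[:-a, 1:] ^ n dvd p" "l < n"
  shows "poly ((pderiv ^^ l) p) a = 0"
proof -
  have "[:-a, 1:] ^ (n - l) dvd (pderiv ^^ l) p"
    using power_dvd_higher_pderiv[of "[:-a, 1:]" l "n - l" p] assms by simp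
  moreover have "[:-a, 1:] dvd [:-a, 1:] ^ (n - l)"
    using assms(2) by (simp add: dvd_power)
  ultimately show ?thesis
    by (meson dvd_trans poly_eq_0_iff_dvd)
qed

lemma hermite_lagrange_basis:
  fixes \<tau> :: "'i \<Rightarrow> 'a::field"
  assumes "finite M" "inj_on \<tau> M" "a \<notin> \<tau> ` M" "m \<in> M"
  obtains b where "[:-a, 1:] ^ k dvd b" "\<And>i. i \<in> M \<Longrightarrow> poly b (\<tau> i) = (if i = m then 1 else 0)"
proof
  define q where "q = [:-a, 1:] ^ k * (\<Prod>i\<in>M - {m}. [:-\<tau> i, 1:])"
  have "poly q (\<tau> m) \<noteq> 0"
    using assms by (auto simp: q_def poly_prod inj_on_eq_iff)
  then show "poly (smult (1 / poly q (\<tau> m)) q) (\<tau> i) = (if i = m then 1 else 0)" if "i \<in> M" for i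
    using that assms(1) by (auto simp: q_def poly_prod)
  show "[:-a, 1:] ^ k dvd smult (1 / poly q (\<tau> m)) q"
    by (simp add: q_def dvd_smult)
qed

definition tpow :: "real \<Rightarrow> nat \<Rightarrow> real \<Rightarrow> real" where
  "tpow \<sigma> r z = (if 0 < \<sigma> * z then z ^ r / fact r else 0)"

lemma tpow_eq_0 [simp]: "\<sigma> * z \<le> 0 \<Longrightarrow> tpow \<sigma> r z = 0"
  by (simp add: tpow_def)

lemma tpow_minus: "tpow \<sigma> r (- z) = (-1) ^ r * tpow (- \<sigma>) r z"
  by (simp add: tpow_def power_minus[of z])

lemma tpow_Suc_eq: "tpow \<sigma> (Suc r) z = tpow \<sigma> r z * z / Suc r"
  by (simp add: tpow_def field_simps del: of_nat_Suc)

lemma continuous_on_tpow: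
  assumes "0 < r"
  shows "continuous_on S (tpow \<sigma> r)"
proof -
  consider "0 < \<sigma>" | "\<sigma> < 0" | "\<sigma> = 0"
    by linarith
  then have "tpow \<sigma> r = (\<lambda>z. (max z 0) ^ r / fact r) \<or> tpow \<sigma> r = (\<lambda>z. (min z 0) ^ r / fact r)
      \<or> tpow \<sigma> r = (\<lambda>_. 0)"
  proof cases
    case 1
    then have "tpow \<sigma> r z = (max z 0) ^ r / fact r" for z
      using assms by (cases "0 < z") (simp_all add: tpow_def zero_less_mult_iff)
    then show ?thesis by blast
  next
    case 2
    then have "tpow \<sigma> r z = (min z 0) ^ r / fact r" for z
      using assms by (cases "z < 0") (simp_all add: tpow_def zero_less_mult_iff)
    then show ?thesis by blast
  qed (simp add: tpow_def fun_eq_iff)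
  then show ?thesis
    by (elim disjE) (simp_all add: continuous_on_max continuous_on_min continuous_on_divide
        continuous_on_power)
qed

lemma tpow_has_real_derivative:
  assumes "0 < r" "z \<noteq> 0 \<or> 2 \<le> r"
  shows "(tpow \<sigma> r has_real_derivative tpow \<sigma> (r - 1) z) (at z)"
proof -
  have same_sign: "0 < \<sigma> * w \<longleftrightarrow> 0 < \<sigma> * z" "\<sigma> * w < 0 \<longleftrightarrow> \<sigma> * z < 0" if "dist w z < \<bar>z\<bar>" for w
    using that by (auto simp: zero_less_mult_iff mult_less_0_iff dist_real_def abs_if split: if_splits)
  consider "0 < \<sigma> * z" | "\<sigma> * z < 0" | "\<sigma> = 0" | "z = 0" "\<sigma> \<noteq> 0"
    using mult_eq_0_iff[of \<sigma> z] by (cases "\<sigma> * z" "0::real" rule: linorder_cases) auto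
  then show ?thesis
  proof cases
    case 1
    have "((\<lambda>w. w ^ r / fact r) has_real_derivative real r * z ^ (r - Suc 0) / fact r) (at z)"
      by (intro DERIV_cdivide DERIV_pow)
    also have "real r * z ^ (r - Suc 0) / fact r = tpow \<sigma> (r - 1) z"
      using 1 \<open>0 < r\<close> by (simp add: tpow_def fact_reduce[of r])
    finally show ?thesis
      by (rule has_field_derivative_transform_within[where S = UNIV and d = "\<bar>z\<bar>", simplified])
         (use 1 same_sign in \<open>auto simp: tpow_def\<close>)
  next
    case 2
    have "((\<lambda>_. 0) has_real_derivative tpow \<sigma> (r - 1) z) (at z)"
      using 2 by simp
    then show ?thesis
      by (rule has_field_derivative_transform_within[where S = UNIV and d = "\<bar>z\<bar>", simplified])
         (use 2 same_sign in \<open>auto simp: tpow_def\<close>)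
  next
    case 3
    then have "tpow \<sigma> n = (\<lambda>_. 0)" for n
      by (simp add: tpow_def fun_eq_iff)
    then show ?thesis
      by simp
  next
    case 4
    then have "0 < r - 1"
      using assms by simp
    then have "isCont (tpow \<sigma> (r - 1)) 0"
      using continuous_on_tpow[of "r - 1" UNIV \<sigma>] by (simp add: continuous_on_eq_continuous_at)
    then have "isCont (\<lambda>w. tpow \<sigma> (r - 1) w / r) 0"
      using \<open>0 < r\<close> by (intro isCont_divide continuous_const) auto
    moreover have "tpow \<sigma> r w - tpow \<sigma> r 0 = tpow \<sigma> (r - 1) w / r * (w - 0)" for w
      using tpow_Suc_eq[of \<sigma> "r - 1" w] \<open>0 < r\<close> by simp
    ultimately show ?thesis
      unfolding CARAT_DERIV \<open>z = 0\<close> by (intro exI[of _ "\<lambda>w. tpow \<sigma> (r - 1) w / r"]) simp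
  qed
qed

definition tspline :: "real \<Rightarrow> nat \<Rightarrow> 'i set \<Rightarrow> ('i \<Rightarrow> real) \<Rightarrow> ('i \<Rightarrow> real) \<Rightarrow> real \<Rightarrow> real" where
  "tspline \<sigma> r M a \<tau> x = (\<Sum>m\<in>M. a m * tpow \<sigma> r (x - \<tau> m))"

lemma tspline_has_real_derivative:
  assumes "2 \<le> r"
  shows "(tspline \<sigma> r M a \<tau> has_real_derivative tspline \<sigma> (r - 1) M a \<tau> x) (at x)"
proof -
  have "((\<lambda>x. \<Sum>m\<in>M. a m * tpow \<sigma> r (x - \<tau> m)) has_real_derivative
      (\<Sum>m\<in>M. a m * (tpow \<sigma> (r - 1) (x - \<tau> m) * 1))) (at x)"
    using assms by (intro DERIV_sum DERIV_cmult DERIV_chain2[OF tpow_has_real_derivative]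
        derivative_eq_intros) auto
  then show ?thesis
    by (simp add: tspline_def[abs_def])
qed

lemma continuous_on_tspline:
  assumes "0 < r"
  shows "continuous_on S (tspline \<sigma> r M a \<tau>)"
proof -
  have "continuous_on S (\<lambda>x. \<Sum>m\<in>M. a m * tpow \<sigma> r (x - \<tau> m))"
    by (intro continuous_on_sum continuous_on_mult_left
        continuous_on_compose2[OF continuous_on_tpow[OF assms, of UNIV]] continuous_intros) auto
  then show ?thesis
    by (simp add: tspline_def[abs_def])
qed

lemma tspline_eq_0: "(\<And>m. m \<in> M \<Longrightarrow> \<sigma> * (x - \<tau> m) \<le> 0) \<Longrightarrow> tspline \<sigma> r M a \<tau> x = 0"
  by (simp add: tspline_def)

lemma tpow_eq_poly_on_knot_free:
  assumes "0 < r" "\<tau> \<notin> {c<..<d}"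
  shows "\<exists>q. degree q \<le> r \<and> (\<forall>x\<in>{c..d}. tpow \<sigma> r (x - \<tau>) = poly q x)"
proof (cases "(\<tau> \<le> c \<and> 0 < \<sigma>) \<or> (d \<le> \<tau> \<and> \<sigma> < 0)")
  case True
  define q where "q = smult (1 / fact r) ([:-\<tau>, 1:] ^ r)"
  have "tpow \<sigma> r (x - \<tau>) = poly q x" if "x \<in> {c..d}" for x
  proof (cases "x = \<tau>")
    case False
    with True that have "0 < \<sigma> * (x - \<tau>)"
      by (auto simp: zero_less_mult_iff)
    then show ?thesis
      by (simp add: tpow_def q_def poly_power)
  qed (use \<open>0 < r\<close> in \<open>simp add: q_def poly_power\<close>)
  moreover have "degree q \<le> r"
    by (simp add: q_def degree_linear_power)
  ultimately show ?thesis
    by blast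
next
  case False
  have "tpow \<sigma> r (x - \<tau>) = poly 0 x" if "x \<in> {c..d}" for x
  proof -
    have "\<sigma> * (x - \<tau>) \<le> 0"
      using False that assms(2) by (auto simp: mult_le_0_iff)
    then show ?thesis
      by simp
  qed
  then show ?thesis
    by (intro exI[of _ 0]) simp
qed

lemma tspline_eq_poly_on_knot_free:
  assumes "finite M" "0 < r" "\<And>m. m \<in> M \<Longrightarrow> \<tau> m \<notin> {c<..<d}"
  shows "\<exists>q. degree q \<le> r \<and> (\<forall>x\<in>{c..d}. tspline \<sigma> r M a \<tau> x = poly q x)"
proof -
  have "\<forall>m\<in>M. \<exists>q. degree q \<le> r \<and> (\<forall>x\<in>{c..d}. tpow \<sigma> r (x - \<tau> m) = poly q x)"
    using tpow_eq_poly_on_knot_free[OF assms(2,3)] by blast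
  from bchoice[OF this] obtain q
    where q: "\<forall>m\<in>M. degree (q m) \<le> r \<and> (\<forall>x\<in>{c..d}. tpow \<sigma> r (x - \<tau> m) = poly (q m) x)"
    by blast
  have "degree (smult (a m) (q m)) \<le> r" if "m \<in> M" for m
    using degree_smult_le[of "a m" "q m"] q that by fastforce
  then have "degree (\<Sum>m\<in>M. smult (a m) (q m)) \<le> r"
    by (rule degree_sum_le[OF assms(1)])
  moreover have "tspline \<sigma> r M a \<tau> x = poly (\<Sum>m\<in>M. smult (a m) (q m)) x" if "x \<in> {c..d}" for x
    using q that by (simp add: tspline_def poly_sum)
  ultimately show ?thesis
    by blast
qed

lemma poly_tspline_has_vector_derivative:
  assumes "Suc n < r"
  shows "((\<lambda>x. poly ((pderiv ^^ n) p) x + tspline \<sigma> (r - n) M a \<tau> x) has_vector_derivative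
           poly ((pderiv ^^ Suc n) p) x + tspline \<sigma> (r - Suc n) M a \<tau> x) (at x within S)"
proof -
  have "r - n - 1 = r - Suc n"
    by simp
  then have "((\<lambda>x. poly ((pderiv ^^ n) p) x + tspline \<sigma> (r - n) M a \<tau> x) has_real_derivative
           poly ((pderiv ^^ Suc n) p) x + tspline \<sigma> (r - Suc n) M a \<tau> x) (at x)"
    using assms by (auto intro!: DERIV_add poly_DERIV tspline_has_real_derivative[THEN DERIV_cong])
  then show ?thesis
    by (simp add: has_real_derivative_iff_has_vector_derivative has_vector_derivative_at_within)
qed

lemma Ck_on_poly_tspline:
  assumes "0 < r" "c \<le> d" "\<And>x. x \<in> {c..d} \<Longrightarrow> f x = poly p x + tspline \<sigma> r M a \<tau> x"
  shows "Ck_on (r - 1) {c..d} f"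
proof (rule Ck_on_derivative_chain[where F = "\<lambda>n x. poly ((pderiv ^^ n) p) x + tspline \<sigma> (r - n) M a \<tau> x"])
  show "continuous_on {c..d} (\<lambda>x. poly ((pderiv ^^ (r - 1)) p) x + tspline \<sigma> (r - (r - 1)) M a \<tau> x)"
    using assms(1) by (intro continuous_on_add continuous_on_tspline) (auto intro: continuous_intros)
qed (use assms in \<open>auto simp del: funpow.simps intro: poly_tspline_has_vector_derivative\<close>)

lemma ider_poly_tspline:
  assumes "c < d" "n < r" "x \<in> {c..d}" "\<And>x. x \<in> {c..d} \<Longrightarrow> f x = poly p x + tspline \<sigma> r M a \<tau> x"
  shows "ider n {c..d} f x = poly ((pderiv ^^ n) p) x + tspline \<sigma> (r - n) M a \<tau> x"
  by (rule ider_eq_derivative_chain[where F = "\<lambda>n x. poly ((pderiv ^^ n) p) x + tspline \<sigma> (r - n) M a \<tau> x"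
        and m = "r - 1"]) (use assms in \<open>auto simp del: funpow.simps intro: poly_tspline_has_vector_derivative\<close>)

lemma exists_pderiv_eq:
  fixes p :: "'a::field_char_0 poly"
  shows "\<exists>q. pderiv q = p \<and> degree q \<le> Suc (degree p)"
proof -
  define q where "q = Poly (0 # map (\<lambda>i. coeff p i / of_nat (Suc i)) [0..<Suc (degree p)])"
  have coeff_q: "coeff q (Suc n) = coeff p n / of_nat (Suc n)" for n
    by (cases "n \<le> degree p") (auto simp: q_def nth_default_def coeff_eq_0 simp del: upt_Suc)
  have "pderiv q = p"
    by (rule poly_eqI) (simp add: coeff_pderiv coeff_q del: of_nat_Suc)
  moreover have "degree q \<le> Suc (degree p)"
  proof (rule degree_le, intro allI impI)
    fix i assume "Suc (degree p) < i"
    then show "coeff q i = 0"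
      by (cases i) (auto simp: coeff_q coeff_eq_0)
  qed
  ultimately show ?thesis
    by blast
qed

lemma poly_if_integral_chain_const:
  fixes \<phi> :: "nat \<Rightarrow> real \<Rightarrow> real"
  assumes "\<And>l x. l < n \<Longrightarrow> x \<in> {c..d} \<Longrightarrow> (\<phi> (Suc l) has_integral \<phi> l x - \<phi> l c) {c..x}"
    and "\<And>x. x \<in> {c..d} \<Longrightarrow> \<phi> n x = \<phi> n c"
  shows "\<exists>p. degree p \<le> n \<and> (\<forall>x\<in>{c..d}. \<phi> 0 x = poly p x)"
  using assms
proof (induction n arbitrary: \<phi>)
  case 0
  show ?case
  proof (intro exI[of _ "[:\<phi> 0 c:]"] conjI ballI)
    fix x assume "x \<in> {c..d}"
    then show "\<phi> 0 x = poly [:\<phi> 0 c:] x"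
      using "0.prems"(2)[of x] by simp
  qed simp
next
  case (Suc n)
  have "\<exists>p. degree p \<le> n \<and> (\<forall>x\<in>{c..d}. \<phi> (Suc 0) x = poly p x)"
  proof (rule Suc.IH[of "\<lambda>l. \<phi> (Suc l)"])
    fix l x assume "l < n" "x \<in> {c..d}"
    then show "(\<phi> (Suc (Suc l)) has_integral \<phi> (Suc l) x - \<phi> (Suc l) c) {c..x}"
      using Suc.prems(1)[of "Suc l" x] by simp
  qed (rule Suc.prems(2))
  then obtain p where p: "degree p \<le> n" "\<And>x. x \<in> {c..d} \<Longrightarrow> \<phi> (Suc 0) x = poly p x"
    by blast
  obtain Q where Q: "pderiv Q = p" "degree Q \<le> Suc (degree p)"
    using exists_pderiv_eq by blast
  have increment: "\<phi> 0 x - \<phi> 0 c = poly Q x - poly Q c" if x: "x \<in> {c..d}" for x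
  proof (rule has_integral_unique)
    show "(\<phi> (Suc 0) has_integral \<phi> 0 x - \<phi> 0 c) {c..x}"
      using Suc.prems(1)[of 0 x] x by simp
    have "(poly p has_integral poly Q x - poly Q c) {c..x}"
      using x Q(1) by (intro fundamental_theorem_of_calculus) (auto intro: poly_has_vector_derivative_within)
    then show "(\<phi> (Suc 0) has_integral poly Q x - poly Q c) {c..x}"
      by (rule has_integral_eq[rotated]) (use x p(2) in simp)
  qed
  have "poly (Q + [:e:]) x = poly Q x + e" for e x
    by simp
  then have "\<forall>x\<in>{c..d}. \<phi> 0 x = poly (Q + [:\<phi> 0 c - poly Q c:]) x"
    using increment by fastforce
  moreover have "degree (Q + [:\<phi> 0 c - poly Q c:]) \<le> Suc n"
    using Q(2) p(1) degree_add_le[of Q "Suc n" "[:\<phi> 0 c - poly Q c:]"] by simp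
  ultimately show ?case
    by blast
qed

definition sobolev_chain :: "nat \<Rightarrow> (real \<Rightarrow> real) \<Rightarrow> (nat \<Rightarrow> real \<Rightarrow> real) \<Rightarrow> bool" where
  "sobolev_chain k f g \<longleftrightarrow> (\<forall>t\<in>{0..1}. g 0 t = f t)
     \<and> (\<forall>l<k. \<forall>t\<in>{0..1}. (g (Suc l) has_integral g l t - g l 0) {0..t})"

lemma sobolev_H_iff:
  "f \<in> sobolev_H k \<longleftrightarrow> (\<exists>g. sobolev_chain k f g \<and> g k absolutely_integrable_on {0..1}
     \<and> (\<lambda>t. (g k t)\<^sup>2) integrable_on {0..1})"
  by (auto simp: sobolev_H_def sobolev_chain_def)

context
  fixes k :: nat and f :: "real \<Rightarrow> real" and g :: "nat \<Rightarrow> real \<Rightarrow> real"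
  assumes chain: "sobolev_chain k f g"
begin

lemma sobolev_chain_eq: "t \<in> {0..1} \<Longrightarrow> g 0 t = f t"
  using chain by (simp add: sobolev_chain_def)

lemma sobolev_chain_integral:
  assumes "l < k" "t \<in> {0..1}"
  shows "g (Suc l) integrable_on {0..t}" "g l t = g l 0 + integral {0..t} (g (Suc l))"
proof -
  have "(g (Suc l) has_integral g l t - g l 0) {0..t}"
    using chain assms by (simp add: sobolev_chain_def)
  then show "g (Suc l) integrable_on {0..t}" "g l t = g l 0 + integral {0..t} (g (Suc l))"
    by (auto simp: has_integral_iff)
qed

lemma sobolev_chain_has_integral:
  assumes "l < k" "0 \<le> x" "x \<le> y" "y \<le> 1"
  shows "(g (Suc l) has_integral g l y - g l x) {x..y}"
proof -
  have int: "g (Suc l) integrable_on {0..y}"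
    using sobolev_chain_integral(1)[OF assms(1)] assms by simp
  have "integral {0..x} (g (Suc l)) + integral {x..y} (g (Suc l)) = integral {0..y} (g (Suc l))"
    using assms int by (intro Henstock_Kurzweil_Integration.integral_combine) auto
  moreover have "g (Suc l) integrable_on {x..y}"
    using int assms by (intro integrable_subinterval_real[OF int]) auto
  ultimately show ?thesis
    using sobolev_chain_integral(2)[OF assms(1), of x] sobolev_chain_integral(2)[OF assms(1), of y] assms
    by (auto simp: has_integral_iff)
qed

lemma sobolev_chain_continuous:
  assumes "l < k"
  shows "continuous_on {0..1} (g l)"
proof -
  have "continuous_on {0..1} (\<lambda>t. g l 0 + integral {0..t} (g (Suc l)))"
    using sobolev_chain_integral(1)[OF assms, of 1]
    by (intro continuous_on_add continuous_on_const indefinite_integral_continuous_1) simp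
  then show ?thesis
    by (rule continuous_on_eq) (rule sobolev_chain_integral(2)[OF assms, symmetric])
qed

lemma sobolev_chain_has_vector_derivative:
  assumes "Suc l < k" "t \<in> {0..1}"
  shows "(g l has_vector_derivative g (Suc l) t) (at t within {0..1})"
proof -
  have "((\<lambda>u. g l 0 + integral {0..u} (g (Suc l))) has_vector_derivative 0 + g (Suc l) t) (at t within {0..1})"
    using sobolev_chain_continuous[OF assms(1)] assms(2)
    by (intro has_vector_derivative_add has_vector_derivative_const integral_has_vector_derivative)
  then have "((\<lambda>u. g l 0 + integral {0..u} (g (Suc l))) has_vector_derivative g (Suc l) t) (at t within {0..1})"
    by simp
  then show ?thesis
    by (rule has_vector_derivative_transform[OF assms(2), rotated])
       (use sobolev_chain_integral(2)[symmetric] assms(1) in simp)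
qed

lemma sobolev_chain_ider:
  assumes "l < k" "t \<in> {0..1}"
  shows "D01 l f t = g l t"
proof (rule ider_eq_derivative_chain[where F = g and m = "k - 1"])
  show "\<And>x. x \<in> {0..1} \<Longrightarrow> g 0 x = f x"
    by (rule sobolev_chain_eq)
  show "\<And>n x. n < k - 1 \<Longrightarrow> x \<in> {0..1} \<Longrightarrow> (g n has_vector_derivative g (Suc n) x) (at x within {0..1})"
    by (rule sobolev_chain_has_vector_derivative) auto
qed (use assms in auto)

lemma sobolev_chain_ider_ae:
  assumes "0 < k"
  obtains N where "negligible N" "\<And>t. t \<in> {0..1} - N \<Longrightarrow> D01 k f t = g k t"
proof -
  have k: "k - 1 < k" "Suc (k - 1) = k"
    using assms by simp_all
  have "g k integrable_on {0..1}"
    using sobolev_chain_integral(1)[OF k(1), of 1] k(2) by simp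
  then have "\<exists>N. negligible N \<and>
      (\<forall>t\<in>{0<..<1} - N. ((\<lambda>u. integral {0..u} (g k)) has_real_derivative g k t) (at t))"
    by (rule integral_has_real_derivative_ae) blast
  then obtain N where N: "negligible N"
    "\<And>t. t \<in> {0<..<1} - N \<Longrightarrow> ((\<lambda>u. integral {0..u} (g k)) has_real_derivative g k t) (at t)"
    by blast
  have top_eq: "D01 (k - 1) f u = g (k - 1) 0 + integral {0..u} (g k)" if "u \<in> {0..1}" for u
    using sobolev_chain_integral(2)[OF k(1) that] sobolev_chain_ider[OF k(1) that] by (simp only: k(2))
  show thesis
  proof (rule that[of "N \<union> {0, 1}"])
    show "negligible (N \<union> {0, 1})"
      using N(1) by simp
    fix t assume t: "t \<in> {0..1} - (N \<union> {0, 1})"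
    then have "((\<lambda>u. integral {0..u} (g k)) has_vector_derivative g k t) (at t within {0..1})"
      using N(2)[of t] by (simp add: has_real_derivative_iff_has_vector_derivative has_vector_derivative_at_within)
    from has_vector_derivative_add[OF has_vector_derivative_const this]
    have "((\<lambda>u. g (k - 1) 0 + integral {0..u} (g k)) has_vector_derivative g k t) (at t within {0..1})"
      by simp
    then have "(D01 (k - 1) f has_vector_derivative g k t) (at t within {0..1})"
      by (rule has_vector_derivative_transform[rotated 2]) (use t top_eq in auto)
    then have "vector_derivative (D01 (k - 1) f) (at t within {0..1}) = g k t"
      using t by (intro vector_derivative_within_closed_interval) auto
    then show "D01 k f t = g k t"
      by (subst k(2)[symmetric]) simp
  qed
qed

end

lemma sobolev_chain_intro:
  fixes G :: "nat \<Rightarrow> real \<Rightarrow> real"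
  assumes "finite F" and "\<And>l. l < k \<Longrightarrow> continuous_on {0..1} (G l)"
    and "\<And>l t. l < k \<Longrightarrow> t \<in> {0<..<1} - F \<Longrightarrow> (G l has_real_derivative G (Suc l) t) (at t)"
  shows "sobolev_chain k (G 0) G"
  unfolding sobolev_chain_def
proof (intro conjI ballI allI impI)
  fix l and t :: real assume l: "l < k" and t: "t \<in> {0..1}"
  then have "continuous_on {0..t} (G l)"
    by (intro continuous_on_subset[OF assms(2)[OF l]]) auto
  then show "(G (Suc l) has_integral G l t - G l 0) {0..t}"
    using l t assms(3) by (intro fundamental_theorem_of_calculus_interior_strong[OF assms(1)])
      (auto simp: has_real_derivative_iff_has_vector_derivative)
qed simp

lemma sobolev_H_if_bounded_top:
  assumes "sobolev_chain k f g" "0 < k" "bounded (g k ` {0..1})"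
  shows "f \<in> sobolev_H k"
proof -
  obtain B where B: "\<forall>t\<in>{0..1}. norm (g k t) \<le> B"
    using assms(3) by (auto simp: bounded_iff)
  have "g k integrable_on {0..1}"
    using sobolev_chain_integral(1)[OF assms(1), of "k - 1" 1] assms(2) by simp
  then have meas: "g k \<in> borel_measurable (lebesgue_on {0..1})"
    by (rule integrable_imp_measurable)
  then have abs: "g k absolutely_integrable_on {0..1}"
    using B by (intro measurable_bounded_by_integrable_imp_absolutely_integrable[where g = "\<lambda>_. B"]) auto
  then have "(\<lambda>t. g k t * g k t) absolutely_integrable_on {0..1}"
    using meas assms(3) by (intro absolutely_integrable_bounded_measurable_product_real) auto
  then have "(\<lambda>t. (g k t)\<^sup>2) integrable_on {0..1}"
    by (simp add: power2_eq_square absolutely_integrable_on_def)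
  then show ?thesis
    using assms(1) abs by (auto simp: sobolev_H_iff)
qed

definition tpow_window :: "real \<Rightarrow> real \<Rightarrow> real \<Rightarrow> nat \<Rightarrow> real \<Rightarrow> real" where
  "tpow_window \<sigma> a x r s = \<sigma> * (tpow \<sigma> r (s - a) - tpow \<sigma> r (s - x))"

lemma tpow_window_has_real_derivative:
  assumes "0 < r" "s \<notin> {a, x} \<or> 2 \<le> r"
  shows "(tpow_window \<sigma> a x r has_real_derivative tpow_window \<sigma> a x (r - 1) s) (at s)"
proof -
  have "((\<lambda>s. \<sigma> * (tpow \<sigma> r (s - a) - tpow \<sigma> r (s - x))) has_real_derivative
      \<sigma> * (tpow \<sigma> (r - 1) (s - a) * 1 - tpow \<sigma> (r - 1) (s - x) * 1)) (at s)"
    using assms by (intro DERIV_cmult DERIV_diff DERIV_chain2[OF tpow_has_real_derivative]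
        derivative_eq_intros) auto
  then show ?thesis
    by (simp add: tpow_window_def[abs_def])
qed

lemma continuous_on_tpow_window:
  assumes "0 < r"
  shows "continuous_on S (tpow_window \<sigma> a x r)"
proof -
  have "continuous_on S (\<lambda>s. \<sigma> * (tpow \<sigma> r (s - a) - tpow \<sigma> r (s - x)))"
    by (intro continuous_on_mult_left continuous_on_diff
        continuous_on_compose2[OF continuous_on_tpow[OF assms, of UNIV]] continuous_intros) auto
  then show ?thesis
    by (simp add: tpow_window_def[abs_def])
qed

lemma tpow_window_0:
  assumes "\<sigma> \<in> {-1, 1}" "s \<notin> {a, x}"
  shows "tpow_window \<sigma> a x 0 s = (if s \<le> x then 1 else 0) - (if s \<le> a then 1 else 0)"
  using assms by (auto simp: tpow_window_def tpow_def)

lemma abs_tpow_window_0_le: "\<sigma> \<in> {-1, 1} \<Longrightarrow> \<bar>tpow_window \<sigma> a x 0 s\<bar> \<le> 1"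
  by (auto simp: tpow_window_def tpow_def)

lemma tpow_window_eq_0_left: "0 < r \<Longrightarrow> 0 \<le> \<sigma> * (x - a) \<Longrightarrow> tpow_window \<sigma> a x r a = 0"
  by (simp add: tpow_window_def algebra_simps)

locale critical_point =
  fixes k N j :: nat and t :: "nat \<Rightarrow> real" and \<gamma> :: "real \<Rightarrow> real" and g :: "nat \<Rightarrow> real \<Rightarrow> real"
  assumes k_pos: "0 < k" and t_0: "t 0 = 0" and t_N: "t N = 1"
    and t_less_Suc: "\<And>i. i < N \<Longrightarrow> t i < t (Suc i)" and j_le_N: "j \<le> N"
    and chain: "sobolev_chain k \<gamma> g" and top: "g k absolutely_integrable_on {0..1}"
    and critical: "\<forall>\<xi>\<in>V_k k N t j. integral {0..1} (\<lambda>s. D01 k \<gamma> s * D01 k \<xi> s) = 0"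
begin

lemma t_less: "i < i' \<Longrightarrow> i' \<le> N \<Longrightarrow> t i < t i'"
proof (induction i')
  case (Suc i')
  then show ?case
    using t_less_Suc[of i'] by (cases "i = i'") auto
qed simp

lemma t_le: "i \<le> i' \<Longrightarrow> i' \<le> N \<Longrightarrow> t i \<le> t i'"
  using t_less[of i i'] by (cases "i = i'") auto

lemma t_in_01: "i \<le> N \<Longrightarrow> t i \<in> {0..1}"
  using t_le[of 0 i] t_le[of i N] t_0 t_N by simp

lemma t_inj: "i \<le> N \<Longrightarrow> i' \<le> N \<Longrightarrow> t i = t i' \<Longrightarrow> i = i'"
  using t_less[of i i'] t_less[of i' i] by (cases i i' rule: linorder_cases) auto

definition other_nodes :: "nat set" where
  "other_nodes = {m. m \<le> N \<and> m \<noteq> j}"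

lemma finite_other_nodes: "finite other_nodes"
  by (simp add: other_nodes_def)

definition basis :: "nat \<Rightarrow> real poly" where
  "basis m = (SOME b. [:-t j, 1:] ^ k dvd b \<and> (\<forall>i\<in>other_nodes. poly b (t i) = (if i = m then 1 else 0)))"

lemma basis:
  assumes "m \<in> other_nodes"
  shows "[:-t j, 1:] ^ k dvd basis m" "\<And>i. i \<in> other_nodes \<Longrightarrow> poly (basis m) (t i) = (if i = m then 1 else 0)"
proof -
  have "inj_on t other_nodes" "t j \<notin> t ` other_nodes"
    using t_inj j_le_N by (auto simp: other_nodes_def inj_on_def)
  then obtain b where "[:-t j, 1:] ^ k dvd b" "\<forall>i\<in>other_nodes. poly b (t i) = (if i = m then 1 else 0)"
    using hermite_lagrange_basis[OF finite_other_nodes _ _ assms] by metis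
  then have "[:-t j, 1:] ^ k dvd basis m \<and> (\<forall>i\<in>other_nodes. poly (basis m) (t i) = (if i = m then 1 else 0))"
    unfolding basis_def by (rule someI[where P = "\<lambda>b. _ dvd b \<and> _ b", OF conjI])
  then show "[:-t j, 1:] ^ k dvd basis m" "\<And>i. i \<in> other_nodes \<Longrightarrow> poly (basis m) (t i) = (if i = m then 1 else 0)"
    by auto
qed

definition spline_coeff :: "nat \<Rightarrow> real" where
  "spline_coeff m = integral {0..1} (\<lambda>s. g k s * poly ((pderiv ^^ k) (basis m)) s)"

lemma integrable_top_times_poly: "(\<lambda>s. g k s * poly p s) integrable_on {0..1}"
proof -
  have "bounded (poly p ` {0..1})"
    by (intro compact_imp_bounded compact_continuous_image) (auto intro: continuous_intros)
  moreover have "poly p \<in> borel_measurable (lebesgue_on {0..1})"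
    by (intro continuous_imp_measurable_on_sets_lebesgue) (auto intro: continuous_intros)
  ultimately have "(\<lambda>s. poly p s * g k s) absolutely_integrable_on {0..1}"
    by (intro absolutely_integrable_bounded_measurable_product_real top) auto
  then show ?thesis
    by (simp add: absolutely_integrable_on_def mult.commute)
qed

lemma top_times_indicator:
  assumes "x \<in> {0..1}"
  shows "(\<lambda>s. g k s * (if s \<le> x then 1 else 0)) integrable_on {0..1}" (is ?int)
    and "integral {0..1} (\<lambda>s. g k s * (if s \<le> x then 1 else 0)) = g (k - 1) x - g (k - 1) 0" (is ?val)
proof -
  have k: "k - 1 < k" "Suc (k - 1) = k"
    using k_pos by simp_all
  have eq: "g k s * (if s \<le> x then 1 else 0) = (if s \<in> {0..x} then g k s else 0)" if "s \<in> {0..1}" for s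
    using that by simp
  have "{0..x} \<inter> {0..1} = {0..x}"
    using assms by auto
  then have restrict: "(\<lambda>s. if s \<in> {0..x} then g k s else 0) integrable_on {0..1}"
    "integral {0..1} (\<lambda>s. if s \<in> {0..x} then g k s else 0) = integral {0..x} (g k)"
    using sobolev_chain_integral(1)[OF chain k(1) assms] k(2)
    by (simp_all only: integrable_restrict_Int integral_restrict_Int)
  show ?int
    by (rule integrable_eq[OF restrict(1)]) (simp add: eq)
  have "integral {0..1} (\<lambda>s. g k s * (if s \<le> x then 1 else 0))
      = integral {0..1} (\<lambda>s. if s \<in> {0..x} then g k s else 0)"
    by (rule integral_cong) (rule eq)
  also have "\<dots> = integral {0..x} (g k)"
    by (rule restrict(2))
  also have "\<dots> = g (k - 1) x - g (k - 1) 0"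
    using sobolev_chain_integral(2)[OF chain k(1) assms] k(2) by simp
  finally show ?val .
qed

lemma critical_chain_integral:
  assumes "sobolev_chain k \<xi> G" "bounded (G k ` {0..1})"
    and "\<And>i. i \<le> N \<Longrightarrow> \<xi> (t i) = 0" "\<And>l. 0 < l \<Longrightarrow> l < k \<Longrightarrow> G l (t j) = 0"
  shows "integral {0..1} (\<lambda>s. g k s * G k s) = 0"
proof -
  have "\<xi> \<in> V_k k N t j"
    unfolding V_k_def
  proof (intro CollectI conjI allI impI ballI)
    show "\<xi> \<in> sobolev_H k"
      by (rule sobolev_H_if_bounded_top[OF assms(1) k_pos assms(2)])
    fix l assume "l \<in> {1..k - 1}"
    then show "D01 l \<xi> (t j) = 0"
      using sobolev_chain_ider[OF assms(1), of l "t j"] assms(4)[of l] t_in_01[OF j_le_N] by auto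
  qed (use assms(3) in auto)
  then have "integral {0..1} (\<lambda>s. D01 k \<gamma> s * D01 k \<xi> s) = 0"
    using critical by blast
  moreover obtain N\<gamma> N\<xi> where "negligible N\<gamma>" "\<And>s. s \<in> {0..1} - N\<gamma> \<Longrightarrow> D01 k \<gamma> s = g k s"
    and "negligible N\<xi>" "\<And>s. s \<in> {0..1} - N\<xi> \<Longrightarrow> D01 k \<xi> s = G k s"
    using sobolev_chain_ider_ae[OF chain k_pos] sobolev_chain_ider_ae[OF assms(1) k_pos] by metis
  then have "integral {0..1} (\<lambda>s. D01 k \<gamma> s * D01 k \<xi> s) = integral {0..1} (\<lambda>s. g k s * G k s)"
    by (intro integral_spike[of "N\<gamma> \<union> N\<xi>"]) auto
  ultimately show ?thesis
    by simp
qed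

definition test_poly :: "real \<Rightarrow> real \<Rightarrow> real poly" where
  "test_poly \<sigma> x = (\<Sum>m\<in>other_nodes. smult (tpow_window \<sigma> (t j) x k (t m)) (basis m))"

definition test_chain :: "real \<Rightarrow> real \<Rightarrow> nat \<Rightarrow> real \<Rightarrow> real" where
  "test_chain \<sigma> x l s = tpow_window \<sigma> (t j) x (k - l) s - poly ((pderiv ^^ l) (test_poly \<sigma> x)) s"

lemma poly_higher_pderiv_test_poly:
  "poly ((pderiv ^^ l) (test_poly \<sigma> x)) s
     = (\<Sum>m\<in>other_nodes. tpow_window \<sigma> (t j) x k (t m) * poly ((pderiv ^^ l) (basis m)) s)"
  by (simp add: test_poly_def higher_pderiv_sum higher_pderiv_smult poly_sum)

lemma test_chain_sobolev_chain: "sobolev_chain k (test_chain \<sigma> x 0) (test_chain \<sigma> x)"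
proof (rule sobolev_chain_intro[of "{t j, x}"])
  fix l assume "l < k"
  then show "continuous_on {0..1} (test_chain \<sigma> x l)"
    unfolding test_chain_def
    by (intro continuous_on_diff continuous_on_tpow_window) (auto intro: continuous_intros)
next
  fix l s assume "l < k" "s \<in> {0<..<1} - {t j, x}"
  then have "((\<lambda>s. tpow_window \<sigma> (t j) x (k - l) s - poly ((pderiv ^^ l) (test_poly \<sigma> x)) s)
      has_real_derivative tpow_window \<sigma> (t j) x (k - l - 1) s
        - poly (pderiv ((pderiv ^^ l) (test_poly \<sigma> x))) s) (at s)"
    by (intro DERIV_diff tpow_window_has_real_derivative poly_DERIV) auto
  moreover have "k - l - 1 = k - Suc l"
    by simp
  ultimately show "(test_chain \<sigma> x l has_real_derivative test_chain \<sigma> x (Suc l) s) (at s)"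
    by (simp add: test_chain_def[abs_def])
qed simp

lemma test_chain_top_bounded:
  assumes "\<sigma> \<in> {-1, 1}"
  shows "bounded (test_chain \<sigma> x k ` {0..1})"
proof -
  have "bounded ((\<lambda>s. tpow_window \<sigma> (t j) x 0 s) ` {0..1})"
    using abs_tpow_window_0_le[OF assms] by (auto simp: bounded_iff intro!: exI[of _ 1])
  moreover have "bounded (poly ((pderiv ^^ k) (test_poly \<sigma> x)) ` {0..1})"
    by (intro compact_imp_bounded compact_continuous_image) (auto intro: continuous_intros)
  ultimately show ?thesis
    unfolding test_chain_def by (auto intro: bounded_minus_comp)
qed

lemma test_chain_at_tj:
  assumes "l < k" "0 \<le> \<sigma> * (x - t j)"
  shows "test_chain \<sigma> x l (t j) = 0"
proof -
  have "poly ((pderiv ^^ l) (basis m)) (t j) = 0" if "m \<in> other_nodes" for m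
    using poly_higher_pderiv_eq_0_if_dvd[OF basis(1)[OF that] assms(1)] .
  then show ?thesis
    using assms by (simp add: test_chain_def poly_higher_pderiv_test_poly tpow_window_eq_0_left)
qed

lemma test_chain_0_at_nodes:
  assumes "i \<le> N" "0 \<le> \<sigma> * (x - t j)"
  shows "test_chain \<sigma> x 0 (t i) = 0"
proof (cases "i = j")
  case True
  then show ?thesis
    using test_chain_at_tj[OF k_pos assms(2)] by simp
next
  case False
  then have i: "i \<in> other_nodes"
    using assms(1) by (simp add: other_nodes_def)
  have "poly (test_poly \<sigma> x) (t i)
      = (\<Sum>m\<in>other_nodes. tpow_window \<sigma> (t j) x k (t m) * (if i = m then 1 else 0))"
    using poly_higher_pderiv_test_poly[of 0] basis(2)[OF _ i] by (auto intro!: sum.cong)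
  also have "\<dots> = (\<Sum>m\<in>other_nodes. if i = m then tpow_window \<sigma> (t j) x k (t m) else 0)"
    by (rule sum.cong) auto
  also have "\<dots> = tpow_window \<sigma> (t j) x k (t i)"
    using i finite_other_nodes by (simp add: sum.delta')
  finally show ?thesis
    by (simp add: test_chain_def)
qed

lemma integral_top_times_test_chain:
  assumes "\<sigma> \<in> {-1, 1}" "x \<in> {0..1}"
  shows "integral {0..1} (\<lambda>s. g k s * test_chain \<sigma> x k s)
    = g (k - 1) x - g (k - 1) (t j) - (\<Sum>m\<in>other_nodes. tpow_window \<sigma> (t j) x k (t m) * spline_coeff m)"
proof -
  define \<beta> where "\<beta> m = tpow_window \<sigma> (t j) x k (t m)" for m
  define P where "P m s = poly ((pderiv ^^ k) (basis m)) s" for m s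
  define ind where "ind y s = g k s * (if s \<le> y then 1 else (0::real))" for y s
  have "g k s * test_chain \<sigma> x k s = ind x s - ind (t j) s - (\<Sum>m\<in>other_nodes. \<beta> m * (g k s * P m s))"
    if "s \<notin> {t j, x}" for s
    using tpow_window_0[OF assms(1) that]
    by (simp add: test_chain_def poly_higher_pderiv_test_poly ind_def \<beta>_def P_def
        right_diff_distrib sum_distrib_left mult.left_commute)
  then have "integral {0..1} (\<lambda>s. g k s * test_chain \<sigma> x k s)
      = integral {0..1} (\<lambda>s. ind x s - ind (t j) s - (\<Sum>m\<in>other_nodes. \<beta> m * (g k s * P m s)))"
    by (intro integral_spike[of "{t j, x}"]) auto
  also have "\<dots> = integral {0..1} (ind x) - integral {0..1} (ind (t j))
      - (\<Sum>m\<in>other_nodes. \<beta> m * integral {0..1} (\<lambda>s. g k s * P m s))"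
  proof -
    have ind: "ind y integrable_on {0..1}" if "y \<in> {0..1}" for y
      unfolding ind_def[abs_def] by (rule top_times_indicator(1)[OF that])
    have P: "(\<lambda>s. \<beta> m * (g k s * P m s)) integrable_on {0..1}" for m
      unfolding P_def by (intro integrable_on_mult_right integrable_top_times_poly)
    show ?thesis
      using ind[OF assms(2)] ind[OF t_in_01[OF j_le_N]] P finite_other_nodes
      by (simp add: integral_diff integrable_diff integral_sum integrable_sum)
  qed
  also have "\<dots> = g (k - 1) x - g (k - 1) (t j) - (\<Sum>m\<in>other_nodes. \<beta> m * spline_coeff m)"
    using top_times_indicator(2)[OF assms(2)] top_times_indicator(2)[OF t_in_01[OF j_le_N]]
    by (simp add: ind_def[abs_def] spline_coeff_def P_def)
  finally show ?thesis
    by (simp add: \<beta>_def)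
qed

lemma top_increment:
  assumes "\<sigma> \<in> {-1, 1}" "x \<in> {0..1}" "0 \<le> \<sigma> * (x - t j)"
  shows "g (k - 1) x - g (k - 1) (t j) = (\<Sum>m\<in>other_nodes. tpow_window \<sigma> (t j) x k (t m) * spline_coeff m)"
proof -
  have "integral {0..1} (\<lambda>s. g k s * test_chain \<sigma> x k s) = 0"
    using test_chain_0_at_nodes[OF _ assms(3)] test_chain_at_tj[OF _ assms(3)]
    by (intro critical_chain_integral[OF test_chain_sobolev_chain test_chain_top_bounded[OF assms(1)]])
  then show ?thesis
    using integral_top_times_test_chain[OF assms(1,2)] by simp
qed

lemma top_eq_tspline:
  assumes "\<sigma> \<in> {-1, 1}"
  obtains C a where "\<And>x. x \<in> {0..1} \<Longrightarrow> 0 \<le> \<sigma> * (x - t j) \<Longrightarrow>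
    g (k - 1) x = C + tspline (- \<sigma>) k other_nodes a t x"
proof
  define C where "C = g (k - 1) (t j) + (\<Sum>m\<in>other_nodes. \<sigma> * tpow \<sigma> k (t m - t j) * spline_coeff m)"
  define a where "a m = - \<sigma> * (-1) ^ k * spline_coeff m" for m
  fix x assume "x \<in> {0..1}" "0 \<le> \<sigma> * (x - t j)"
  have "tpow \<sigma> k (t m - x) = (-1) ^ k * tpow (- \<sigma>) k (x - t m)" for m
    using tpow_minus[of \<sigma> k "x - t m"] by simp
  then have "tpow_window \<sigma> (t j) x k (t m) * spline_coeff m
      = \<sigma> * tpow \<sigma> k (t m - t j) * spline_coeff m + a m * tpow (- \<sigma>) k (x - t m)" for m
    by (simp add: tpow_window_def a_def algebra_simps)
  then show "g (k - 1) x = C + tspline (- \<sigma>) k other_nodes a t x"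
    using top_increment[OF assms \<open>x \<in> {0..1}\<close> \<open>0 \<le> \<sigma> * (x - t j)\<close>]
    by (simp add: C_def tspline_def sum.distrib algebra_simps)
qed

lemma gamma_eq_poly_tspline:
  assumes "\<sigma> \<in> {-1, 1}" "0 \<le> c" "d \<le> 1" "\<And>x. x \<in> {c..d} \<Longrightarrow> 0 \<le> \<sigma> * (x - t j)"
  shows "\<exists>p a. degree p \<le> k - 1 \<and> (\<forall>x\<in>{c..d}. \<gamma> x = poly p x + tspline (- \<sigma>) (2 * k - 1) other_nodes a t x)"
proof -
  obtain C a where top_eq: "\<And>x. x \<in> {0..1} \<Longrightarrow> 0 \<le> \<sigma> * (x - t j) \<Longrightarrow>
      g (k - 1) x = C + tspline (- \<sigma>) k other_nodes a t x"
    using top_eq_tspline[OF assms(1)] by blast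
  define \<phi> where "\<phi> l x = g l x - tspline (- \<sigma>) (2 * k - 1 - l) other_nodes a t x" for l x
  have "\<exists>p. degree p \<le> k - 1 \<and> (\<forall>x\<in>{c..d}. \<phi> 0 x = poly p x)"
  proof (rule poly_if_integral_chain_const)
    fix l x assume l: "l < k - 1" and x: "x \<in> {c..d}"
    have "(g (Suc l) has_integral g l x - g l c) {c..x}"
      using l x assms(2,3) by (intro sobolev_chain_has_integral[OF chain]) auto
    moreover have "(tspline (- \<sigma>) (2 * k - 1 - Suc l) other_nodes a t has_integral
        tspline (- \<sigma>) (2 * k - 1 - l) other_nodes a t x - tspline (- \<sigma>) (2 * k - 1 - l) other_nodes a t c) {c..x}"
    proof (rule fundamental_theorem_of_calculus)
      fix y :: real
      have "2 * k - 1 - l - 1 = 2 * k - 1 - Suc l" "2 \<le> 2 * k - 1 - l"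
        using l by simp_all
      then show "(tspline (- \<sigma>) (2 * k - 1 - l) other_nodes a t has_vector_derivative
          tspline (- \<sigma>) (2 * k - 1 - Suc l) other_nodes a t y) (at y within {c..x})"
        using tspline_has_real_derivative[of "2 * k - 1 - l" "- \<sigma>" other_nodes a t y]
        by (simp add: has_real_derivative_iff_has_vector_derivative has_vector_derivative_at_within)
    qed (use x in simp)
    ultimately show "(\<phi> (Suc l) has_integral \<phi> l x - \<phi> l c) {c..x}"
      unfolding \<phi>_def[abs_def] by (rule has_integral_diff[THEN has_integral_eq_rhs]) simp
  next
    fix x assume "x \<in> {c..d}"
    then have "x \<in> {0..1}" "c \<in> {0..1}" "0 \<le> \<sigma> * (x - t j)" "0 \<le> \<sigma> * (c - t j)"
      using assms by auto
    moreover have "2 * k - 1 - (k - 1) = k"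
      using k_pos by simp
    ultimately show "\<phi> (k - 1) x = \<phi> (k - 1) c"
      using top_eq by (simp add: \<phi>_def)
  qed
  then obtain p where "degree p \<le> k - 1" "\<And>x. x \<in> {c..d} \<Longrightarrow> \<phi> 0 x = poly p x"
    by blast
  moreover have "\<gamma> x = \<phi> 0 x + tspline (- \<sigma>) (2 * k - 1) other_nodes a t x" if "x \<in> {c..d}" for x
    using that assms(2,3) sobolev_chain_eq[OF chain, of x] by (simp add: \<phi>_def)
  ultimately show ?thesis
    by auto
qed

lemma Ck_on_gamma_side:
  assumes "\<sigma> \<in> {-1, 1}" "0 \<le> c" "c \<le> d" "d \<le> 1" "\<And>x. x \<in> {c..d} \<Longrightarrow> 0 \<le> \<sigma> * (x - t j)"
  shows "Ck_on (2 * k - 2) {c..d} \<gamma>"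
proof -
  obtain p a where "\<forall>x\<in>{c..d}. \<gamma> x = poly p x + tspline (- \<sigma>) (2 * k - 1) other_nodes a t x"
    using gamma_eq_poly_tspline[OF assms(1,2,4,5)] by blast
  then have "Ck_on (2 * k - 1 - 1) {c..d} \<gamma>"
    using k_pos assms(3) by (intro Ck_on_poly_tspline) auto
  then show ?thesis
    unfolding diff_diff_left one_add_one .
qed

lemma ider_gamma_side_boundary:
  assumes "\<sigma> \<in> {-1, 1}" "0 \<le> c" "c < d" "d \<le> 1" "\<And>x. x \<in> {c..d} \<Longrightarrow> 0 \<le> \<sigma> * (x - t j)"
    and "e \<in> {c..d}" "\<And>m. m \<le> N \<Longrightarrow> \<sigma> * (t m - e) \<le> 0" and "0 < l" "l < k"
  shows "ider (k + l - 1) {c..d} \<gamma> e = 0"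
proof -
  obtain p a where p: "degree p \<le> k - 1"
    and eq: "\<forall>x\<in>{c..d}. \<gamma> x = poly p x + tspline (- \<sigma>) (2 * k - 1) other_nodes a t x"
    using gamma_eq_poly_tspline[OF assms(1,2,4,5)] by blast
  have "ider (k + l - 1) {c..d} \<gamma> e
      = poly ((pderiv ^^ (k + l - 1)) p) e + tspline (- \<sigma>) (2 * k - 1 - (k + l - 1)) other_nodes a t e"
    using assms(3,6,9) eq by (intro ider_poly_tspline) auto
  moreover have "(pderiv ^^ (k + l - 1)) p = 0"
    using p assms(8) k_pos by (intro higher_pderiv_eq_0) linarith
  moreover have "tspline (- \<sigma>) (2 * k - 1 - (k + l - 1)) other_nodes a t e = 0"
    using assms(7) by (intro tspline_eq_0) (auto simp: other_nodes_def algebra_simps)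
  ultimately show ?thesis
    by simp
qed

lemma gamma_eq_poly_on_piece:
  assumes "i \<in> {1..N}"
  shows "\<exists>q. degree q \<le> 2 * k - 1 \<and> (\<forall>x\<in>{t (i - 1)..t i}. \<gamma> x = poly q x)"
proof -
  define \<sigma> :: real where "\<sigma> = (if i \<le> j then -1 else 1)"
  have side: "0 \<le> \<sigma> * (x - t j)" if "x \<in> {t (i - 1)..t i}" for x
  proof (cases "i \<le> j")
    case True
    then have "t i \<le> t j"
      using j_le_N by (intro t_le)
    then show ?thesis
      using True that by (simp add: \<sigma>_def)
  next
    case False
    then have "t j \<le> t (i - 1)"
      using assms by (intro t_le) auto
    then show ?thesis
      using False that by (simp add: \<sigma>_def)
  qed
  have "\<sigma> \<in> {-1, 1}" "0 \<le> t (i - 1)" "t i \<le> 1"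
    using assms t_in_01[of "i - 1"] t_in_01[of i] by (auto simp: \<sigma>_def)
  then obtain p a where p: "degree p \<le> k - 1"
    and eq: "\<forall>x\<in>{t (i - 1)..t i}. \<gamma> x = poly p x + tspline (- \<sigma>) (2 * k - 1) other_nodes a t x"
    using gamma_eq_poly_tspline[OF _ _ _ side] by blast
  have knots: "t m \<notin> {t (i - 1)<..<t i}" if "m \<in> other_nodes" for m
  proof (cases "m \<le> i - 1")
    case True
    then have "t m \<le> t (i - 1)"
      using assms by (intro t_le) auto
    then show ?thesis
      by simp
  next
    case False
    then have "t i \<le> t m"
      using that by (intro t_le) (auto simp: other_nodes_def)
    then show ?thesis
      by simp
  qed
  have "0 < 2 * k - 1"
    using k_pos by simp
  from tspline_eq_poly_on_knot_free[where \<tau> = t and \<sigma> = "- \<sigma>" and a = a, OF finite_other_nodes this knots]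
  obtain q where q: "degree q \<le> 2 * k - 1"
    "\<forall>x\<in>{t (i - 1)..t i}. tspline (- \<sigma>) (2 * k - 1) other_nodes a t x = poly q x"
    by blast
  have "\<forall>x\<in>{t (i - 1)..t i}. \<gamma> x = poly (p + q) x"
    using eq q(2) by simp
  moreover have "degree (p + q) \<le> 2 * k - 1"
    by (rule degree_add_le) (use p q(1) in linarith)+
  ultimately show ?thesis
    by blast
qed

end

theorem proposition4p2:
  fixes k N j :: nat and t p v :: "nat \<Rightarrow> real" and \<gamma> :: "real \<Rightarrow> real"
  assumes "k \<ge> 1" and "N \<ge> 1"
    and "t 0 = 0" and "t N = 1" and "\<And>i. i < N \<Longrightarrow> t i < t (Suc i)"
    and "j \<le> N"
    and "\<gamma> \<in> Gamma_k k N t p v j"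
    and "\<forall>\<xi>\<in>V_k k N t j. integral {0..1} (\<lambda>s. D01 k \<gamma> s * D01 k \<xi> s) = 0"
  shows "(\<forall>i\<in>{1..N}. smooth_on {t (i-1)..t i} \<gamma>
            \<and> (\<forall>s\<in>{t (i-1)..t i}. ider (2*k) {t (i-1)..t i} \<gamma> s = 0))
       \<and> Ck_on (2*k-2) {0..t j} \<gamma> \<and> Ck_on (2*k-2) {t j..1} \<gamma>
       \<and> (t j \<noteq> 0 \<longrightarrow> (\<forall>l\<in>{1..k-1}. ider (k+l-1) {0..t j} \<gamma> 0 = 0))
       \<and> (t j \<noteq> 1 \<longrightarrow> (\<forall>l\<in>{1..k-1}. ider (k+l-1) {t j..1} \<gamma> 1 = 0))"
proof -
  obtain g where "sobolev_chain k \<gamma> g" "g k absolutely_integrable_on {0..1}"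
    using assms(7) by (auto simp: Gamma_k_def sobolev_H_iff)
  then interpret critical_point k N j t \<gamma> g
    using assms by unfold_locales auto
  have tj: "0 \<le> t j" "t j \<le> 1"
    using t_in_01[OF j_le_N] by auto
  have pieces: "smooth_on {t (i - 1)..t i} \<gamma> \<and> (\<forall>s\<in>{t (i - 1)..t i}. ider (2 * k) {t (i - 1)..t i} \<gamma> s = 0)"
    if i: "i \<in> {1..N}" for i
  proof -
    obtain q where q: "degree q \<le> 2 * k - 1" "\<And>x. x \<in> {t (i - 1)..t i} \<Longrightarrow> \<gamma> x = poly q x"
      using gamma_eq_poly_on_piece[OF i] by blast
    have "i - 1 < N" "Suc (i - 1) = i"
      using i by auto
    then have less: "t (i - 1) < t i"
      using t_less_Suc[of "i - 1"] by simp
    have "smooth_on {t (i - 1)..t i} \<gamma>"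
      by (rule smooth_on_cong[OF _ smooth_on_poly]) (use q(2) less in auto)
    moreover have "ider (2 * k) {t (i - 1)..t i} \<gamma> s = 0" if "s \<in> {t (i - 1)..t i}" for s
    proof -
      have "ider (2 * k) {t (i - 1)..t i} \<gamma> s = ider (2 * k) {t (i - 1)..t i} (poly q) s"
        using q(2) that by (rule ider_cong)
      also have "\<dots> = poly ((pderiv ^^ (2 * k)) q) s"
        using less that by (rule ider_poly)
      also have "(pderiv ^^ (2 * k)) q = 0"
        using q(1) k_pos by (intro higher_pderiv_eq_0) simp
      finally show ?thesis
        by simp
    qed
    ultimately show ?thesis
      by blast
  qed
  have left: "Ck_on (2 * k - 2) {0..t j} \<gamma>"
    by (rule Ck_on_gamma_side[of "-1"]) (use tj in auto)
  have right: "Ck_on (2 * k - 2) {t j..1} \<gamma>"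
    by (rule Ck_on_gamma_side[of 1]) (use tj in auto)
  have "ider (k + l - 1) {0..t j} \<gamma> 0 = 0" if "t j \<noteq> 0" "l \<in> {1..k - 1}" for l
    using that tj t_in_01 by (intro ider_gamma_side_boundary[of "-1"]) auto
  moreover have "ider (k + l - 1) {t j..1} \<gamma> 1 = 0" if "t j \<noteq> 1" "l \<in> {1..k - 1}" for l
    using that tj t_in_01 by (intro ider_gamma_side_boundary[of 1]) auto
  ultimately show ?thesis
    using pieces left right by blast
qed

end
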